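(* Let $m$ be a non-negative integer and let $A,D$ be $k$-tuples of elements of $\mathbb{Z}/m\mathbb{Z}$. Then for every non-negative integer $i$, $$\partial^i\,\mathrm{IAP}(A,D)=(-1)^i\,\mathrm{IAP}\big(AC_k^{(i)}+DT_k^{(i)},\,DC_k^{(i)}\big),$$ where $C_k^{(i)}=\big(\sum_{\alpha\in\mathbb{Z}}\binom{i}{\alpha k+r-s}\big)_{1\le r,s\le k}$ and $T_k^{(i)}=\big(\sum_{\alpha\in\mathbb{Z}}\alpha\binom{i}{\alpha k+r-s}\big)_{1\le r,s\le k}$.
   Context: $\mathbb{Z}/0\mathbb{Z}=\mathbb{Z}$; $\binom{a}{b}=0$ if $b<0$ or $b>a$. Tuples are row vectors, integer matrices act after reduction mod $m$. $\mathrm{IAP}(A,D)$, for $A=(a_0,\dots,a_{k-1})$, $D=(d_0,\dots,d_{k-1})$, is $(u_j)_{j\in\mathbb{Z}}$ with $u_{qk+r}=a_r+qd_r$. For a sequence $S=(u_j)_{j\in\mathbb{Z}}$, $\partial S=(-u_j-u_{j+1})_{j\in\mathbb{Z}}$, and $\partial^i$ is the $i$-th iterate ($\partial^0 S=S$). *)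

theory Defs
  imports Main "HOL-Library.Groups_Big_Fun" "HOL-Number_Theory.Cong"
begin

text \<open>Elements of Z/mZ are represented by integer representatives; equality in
Z/mZ is congruence modulo m (for m = 0 this is equality in Z).
A k-tuple (a_0,...,a_{k-1}) is a function nat => int (only values below k matter).\<close>

definition IAP :: "nat \<Rightarrow> (nat \<Rightarrow> int) \<Rightarrow> (nat \<Rightarrow> int) \<Rightarrow> int \<Rightarrow> int" where
  "IAP k A D j = A (nat (j mod int k)) + (j div int k) * D (nat (j mod int k))"

definition dseq :: "(int \<Rightarrow> int) \<Rightarrow> int \<Rightarrow> int" where
  "dseq S j = - S j - S (j + 1)"

definition ibinom :: "nat \<Rightarrow> int \<Rightarrow> int" where
  "ibinom a b = (if 0 \<le> b \<and> b \<le> int a then int (a choose nat b) else 0)"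

text \<open>Matrices C_k^(i), T_k^(i), with 0-based indices r, s < k (the entry depends
only on r - s, so the shift from 1-based indexing is harmless).\<close>
definition Cmat :: "nat \<Rightarrow> nat \<Rightarrow> nat \<Rightarrow> nat \<Rightarrow> int" where
  "Cmat k i r s = Sum_any (\<lambda>\<alpha>::int. ibinom i (\<alpha> * int k + int r - int s))"

definition Tmat :: "nat \<Rightarrow> nat \<Rightarrow> nat \<Rightarrow> nat \<Rightarrow> int" where
  "Tmat k i r s = Sum_any (\<lambda>\<alpha>::int. \<alpha> * ibinom i (\<alpha> * int k + int r - int s))"

definition vecmat :: "nat \<Rightarrow> (nat \<Rightarrow> int) \<Rightarrow> (nat \<Rightarrow> nat \<Rightarrow> int) \<Rightarrow> nat \<Rightarrow> int" where
  "vecmat k A M s = (\<Sum>r<k. A r * M r s)"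

end

theory Submission
  imports Defs
begin

text \<open>By Pascal's rule, \<open>\<partial>\<^sup>i S j = (-1)\<^sup>i \<Sum>\<^sub>t binom(i,t) S(j+t)\<close>. Write \<open>j = qk + s\<close>
  and group the index \<open>t\<close> by the residue \<open>r\<close> of \<open>j + t\<close>, i.e. \<open>t = \<alpha>k + r - s\<close>. Then
  \<open>IAP(A,D)(j+t) = A\<^sub>r + (q+\<alpha>) D\<^sub>r\<close>, and summing the binomial weights over \<open>\<alpha>\<close> yields the
  entries of \<open>C\<close> and \<open>T\<close>. So the identity holds in \<open>\<int>\<close>, and a fortiori modulo \<open>m\<close>.\<close>

lemma Sum_any_reindex_inj:
  fixes f :: "'a \<Rightarrow> 'b::comm_monoid_add"
  assumes "inj h" and "{x. f x \<noteq> 0} \<subseteq> range h"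
  shows "Sum_any (\<lambda>a. f (h a)) = Sum_any f"
proof -
  have "Sum_any (\<lambda>a. f (h a)) = sum (f \<circ> h) (h -` {x. f x \<noteq> 0})"
    by (simp add: Sum_any.expand_set vimage_def)
  also have "\<dots> = sum f (h ` h -` {x. f x \<noteq> 0})"
    using assms(1) by (simp add: sum.reindex inj_on_def inj_def)
  also have "h ` h -` {x. f x \<noteq> 0} = {x. f x \<noteq> 0}"
    using assms(2) by blast
  finally show ?thesis by (simp add: Sum_any.expand_set)
qed

lemma sum_Sum_any_swap:
  fixes f :: "'i \<Rightarrow> 'a \<Rightarrow> 'b::comm_monoid_add"
  assumes "finite I" and "\<And>i. i \<in> I \<Longrightarrow> finite {a. f i a \<noteq> 0}"
  shows "(\<Sum>i\<in>I. Sum_any (f i)) = Sum_any (\<lambda>a. \<Sum>i\<in>I. f i a)"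
  using assms
proof (induction I rule: finite_induct)
  case (insert i I)
  have "finite (\<Union>i\<in>I. {a. f i a \<noteq> 0})"
    using insert by auto
  then have "finite {a. (\<Sum>i\<in>I. f i a) \<noteq> 0}"
    by (rule finite_subset[rotated]) (auto elim: sum.not_neutral_contains_not_neutral)
  with insert show ?case
    by (simp add: Sum_any.distrib)
qed simp

lemma Sum_any_split_residues:
  fixes g :: "int \<Rightarrow> 'a::comm_monoid_add"
  assumes k: "0 < k" and fin: "finite {t. g t \<noteq> 0}"
  shows "Sum_any g = (\<Sum>r<k. Sum_any (\<lambda>\<alpha>. g (\<alpha> * int k + int r - c)))"
proof -
  define f where "f r t = (if (t + c) mod int k = int r then g t else 0)" for r t
  have "Sum_any (\<lambda>\<alpha>. g (\<alpha> * int k + int r - c)) = Sum_any (f r)" if "r < k" for r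
  proof -
    have "Sum_any (\<lambda>\<alpha>. g (\<alpha> * int k + int r - c)) = Sum_any (\<lambda>\<alpha>. f r (\<alpha> * int k + int r - c))"
      using that by (simp add: f_def)
    also have "\<dots> = Sum_any (f r)"
    proof (rule Sum_any_reindex_inj)
      show "inj (\<lambda>\<alpha>. \<alpha> * int k + int r - c)"
        using k by (auto simp: inj_def)
      show "{t. f r t \<noteq> 0} \<subseteq> range (\<lambda>\<alpha>. \<alpha> * int k + int r - c)"
      proof
        fix t assume "t \<in> {t. f r t \<noteq> 0}"
        then have "(t + c) mod int k = int r"
          by (auto simp: f_def split: if_splits)
        then have "t = ((t + c) div int k) * int k + int r - c"
          by (metis add_diff_cancel_right' div_mult_mod_eq)
        then show "t \<in> range (\<lambda>\<alpha>. \<alpha> * int k + int r - c)" by blast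
      qed
    qed
    finally show ?thesis .
  qed
  then have "(\<Sum>r<k. Sum_any (\<lambda>\<alpha>. g (\<alpha> * int k + int r - c))) = (\<Sum>r<k. Sum_any (f r))"
    by simp
  also have "\<dots> = Sum_any (\<lambda>t. \<Sum>r<k. f r t)"
    by (rule sum_Sum_any_swap) (auto intro: finite_subset[OF _ fin] simp: f_def)
  also have "(\<lambda>t. \<Sum>r<k. f r t) = g"
  proof
    fix t
    have "(\<Sum>r<k. f r t) = (\<Sum>r<k. if r = nat ((t + c) mod int k) then g t else 0)"
      by (intro sum.cong) (auto simp: f_def)
    then show "(\<Sum>r<k. f r t) = g t"
      using k by (simp add: nat_less_iff)
  qed
  finally show ?thesis ..
qed

lemma Sum_any_linear_combination:
  fixes f g :: "'a \<Rightarrow> 'b::semiring_0"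
  assumes "finite {a. f a \<noteq> 0}" and "finite {a. g a \<noteq> 0}"
  shows "Sum_any (\<lambda>a. x * f a + y * g a) = x * Sum_any f + y * Sum_any g"
proof -
  have "finite {a. x * f a \<noteq> 0}" "finite {a. y * g a \<noteq> 0}"
    using assms by (auto intro: finite_subset[rotated])
  then show ?thesis
    using assms by (simp add: Sum_any.distrib Sum_any_right_distrib)
qed

lemma ibinom_0: "ibinom 0 t = (if t = 0 then 1 else 0)"
  by (auto simp: ibinom_def)

lemma ibinom_Suc: "ibinom (Suc i) t = ibinom i t + ibinom i (t - 1)"
proof -
  consider "t < 0" | "t = 0" | "0 < t \<and> t \<le> int i" | "t = int i + 1" | "t > int i + 1"
    by linarith
  then show ?thesis
  proof cases
    case 3
    then have "Suc i choose nat t = (i choose (nat t - 1)) + (i choose nat t)"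
      using choose_reduce_nat[of "Suc i" "nat t"] by simp
    moreover have "nat (t - 1) = nat t - 1"
      using 3 by simp
    ultimately show ?thesis
      using 3 by (simp add: ibinom_def)
  next
    case 4
    then show ?thesis
      by (simp add: ibinom_def nat_add_distrib)
  qed (auto simp: ibinom_def)
qed

lemma finite_ibinom_affine_support:
  assumes "0 < k"
  shows "finite {\<alpha>. ibinom i (\<alpha> * int k + c) \<noteq> 0}"
proof (rule finite_subset)
  show "{\<alpha>. ibinom i (\<alpha> * int k + c) \<noteq> 0} \<subseteq> (\<lambda>\<alpha>. \<alpha> * int k + c) -` {0..int i}"
    by (auto simp: ibinom_def split: if_splits)
  show "finite ((\<lambda>\<alpha>. \<alpha> * int k + c) -` {0..int i})"
    using assms by (intro finite_vimageI) (auto simp: inj_def)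
qed

lemma finite_ibinom_shift_support: "finite {t. ibinom i (t + c) * S t \<noteq> 0}"
  using finite_ibinom_affine_support[of 1 i c] by (auto intro: finite_subset[rotated])

lemma dseq_funpow:
  "(dseq ^^ i) S j = (-1) ^ i * Sum_any (\<lambda>t. ibinom i t * S (j + t))"
proof (induction i arbitrary: j)
  case 0
  have "Sum_any (\<lambda>t. ibinom 0 t * S (j + t)) = Sum_any (\<lambda>t. if t = 0 then S (j + t) else 0)"
    by (intro Sum_any.cong) (simp add: ibinom_0)
  then show ?case
    by simp
next
  case (Suc i)
  have shift: "Sum_any (\<lambda>t. ibinom i t * S (j + 1 + t)) = Sum_any (\<lambda>t. ibinom i (t - 1) * S (j + t))"
    by (rule Sum_any.reindex_cong[of "\<lambda>t. t - 1"])
       (auto simp: bij_def inj_def surj_def fun_eq_iff intro: exI[of _ "_ + 1"] ac_simps)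
  have "(dseq ^^ Suc i) S j = - (dseq ^^ i) S j - (dseq ^^ i) S (j + 1)"
    by (simp add: dseq_def)
  also have "\<dots> = (-1) ^ Suc i * (Sum_any (\<lambda>t. ibinom i t * S (j + t))
                                    + Sum_any (\<lambda>t. ibinom i (t - 1) * S (j + t)))"
    by (simp only: Suc.IH shift) (simp add: algebra_simps)
  also have "Sum_any (\<lambda>t. ibinom i t * S (j + t)) + Sum_any (\<lambda>t. ibinom i (t - 1) * S (j + t))
      = Sum_any (\<lambda>t. ibinom i t * S (j + t) + ibinom i (t - 1) * S (j + t))"
    using finite_ibinom_shift_support[of i 0] finite_ibinom_shift_support[of i "-1"]
    by (intro Sum_any.distrib[symmetric]) simp_all
  also have "\<dots> = Sum_any (\<lambda>t. ibinom (Suc i) t * S (j + t))"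
    by (simp add: ibinom_Suc algebra_simps)
  finally show ?case .
qed

lemma IAP_mult_add:
  assumes "r < k"
  shows "IAP k A D (x * int k + int r) = A r + x * D r"
  using assms by (simp add: IAP_def)

lemma Sum_any_ibinom_IAP_residue:
  assumes "0 < k" and "r < k"
  shows "Sum_any (\<lambda>\<alpha>. ibinom i (\<alpha> * int k + int r - int s) * IAP k A D ((q + \<alpha>) * int k + int r))
       = A r * Cmat k i r s + D r * Tmat k i r s + q * (D r * Cmat k i r s)"
proof -
  define b where "b \<alpha> = ibinom i (\<alpha> * int k + int r - int s)" for \<alpha>
  have fin_b: "finite {\<alpha>. b \<alpha> \<noteq> 0}"
    using finite_ibinom_affine_support[OF assms(1), of i "int r - int s"]
    by (simp add: b_def add_diff_eq)
  then have fin_\<alpha>b: "finite {\<alpha>. \<alpha> * b \<alpha> \<noteq> 0}"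
    by (rule finite_subset[rotated]) auto
  have "Sum_any (\<lambda>\<alpha>. b \<alpha> * IAP k A D ((q + \<alpha>) * int k + int r))
      = Sum_any (\<lambda>\<alpha>. (A r + q * D r) * b \<alpha> + D r * (\<alpha> * b \<alpha>))"
    by (intro Sum_any.cong, simp only: IAP_mult_add[OF assms(2)]) (simp add: algebra_simps)
  also have "\<dots> = (A r + q * D r) * Sum_any b + D r * Sum_any (\<lambda>\<alpha>. \<alpha> * b \<alpha>)"
    using fin_b fin_\<alpha>b by (rule Sum_any_linear_combination)
  also have "\<dots> = (A r + q * D r) * Cmat k i r s + D r * Tmat k i r s"
    by (simp add: Cmat_def Tmat_def b_def)
  finally show ?thesis
    by (simp add: b_def algebra_simps)
qed

lemma dseq_funpow_IAP:
  assumes k: "0 < k"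
  shows "(dseq ^^ i) (IAP k A D) j
       = (-1) ^ i * IAP k (\<lambda>s. vecmat k A (Cmat k i) s + vecmat k D (Tmat k i) s)
                          (vecmat k D (Cmat k i)) j"
proof -
  define s where "s = nat (j mod int k)"
  define q where "q = j div int k"
  have s: "s < k"
    using k by (simp add: s_def nat_less_iff)
  have j: "j = q * int k + int s"
    using k by (simp add: s_def q_def)
  have "finite {t. ibinom i t * IAP k A D (j + t) \<noteq> 0}"
    using finite_ibinom_shift_support[of i 0] by simp
  then have "Sum_any (\<lambda>t. ibinom i t * IAP k A D (j + t))
      = (\<Sum>r<k. Sum_any (\<lambda>\<alpha>. ibinom i (\<alpha> * int k + int r - int s)
                                * IAP k A D (j + (\<alpha> * int k + int r - int s))))"
    by (rule Sum_any_split_residues[OF k])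
  also have "\<dots> = (\<Sum>r<k. Sum_any (\<lambda>\<alpha>. ibinom i (\<alpha> * int k + int r - int s)
                                * IAP k A D ((q + \<alpha>) * int k + int r)))"
    by (simp add: j algebra_simps)
  also have "\<dots> = (\<Sum>r<k. A r * Cmat k i r s + D r * Tmat k i r s + q * (D r * Cmat k i r s))"
    using k by (simp add: Sum_any_ibinom_IAP_residue)
  also have "\<dots> = IAP k (\<lambda>s. vecmat k A (Cmat k i) s + vecmat k D (Tmat k i) s)
                         (vecmat k D (Cmat k i)) j"
    using s by (simp add: j IAP_mult_add vecmat_def sum.distrib sum_distrib_left)
  finally show ?thesis
    by (simp add: dseq_funpow)
qed

theorem proposition6:
  fixes m k i :: nat and A D :: "nat \<Rightarrow> int"
  assumes "k \<ge> 1"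
  shows "\<forall>j::int. [(dseq ^^ i) (IAP k A D) j
            = (-1) ^ i * IAP k (\<lambda>s. vecmat k A (Cmat k i) s + vecmat k D (Tmat k i) s)
                                 (vecmat k D (Cmat k i)) j] (mod int m)"
  using assms by (simp add: dseq_funpow_IAP)

end
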